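(* Let $(v_0,V,E,\pi)$ be an oriented F-graph that is acyclic and independent, with $\pi:E\to\mathbb{R}_{>0}$. Define $\mathrm{Out}:V\to\mathbb{R}_{\ge0}$ by the recurrence $$\mathrm{Out}(s)=\mathbf{1}_{s=v_0}+\sum_{\substack{e'\in E\\ s\in\mathbf{h}(e')}}\pi(e')\,\mathrm{Out}(t(e'))\prod_{\substack{s'\in\mathbf{h}(e')\\ s'\neq s}}W(s').$$ Then for every arc $e\in E$, $$\sum_{\substack{p\in\mathcal{P}(v_0)\\ e\in p}}\pi(p)=\mathrm{Out}(t(e))\cdot\pi(e)\cdot\prod_{s'\in\mathbf{h}(e)}W(s'),$$ and consequently the probability that a random F-path $p\in\mathcal{P}(v_0)$, drawn with probability $\pi(p)/W(v_0)$, uses the arc $e$ equals $$p_e=\frac{\mathrm{Out}(t(e))\cdot\pi(e)\cdot\prod_{s'\in\mathbf{h}(e)}W(s')}{W(v_0)}.$$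
   Context: An F-graph is a pair $(V,E)$ where $V$ is a finite set of vertices and $E$ is a finite set of F-arcs; an F-arc $e=(t(e)\to\mathbf{h}(e))$ has a single tail vertex $t(e)\in V$ and a head $\mathbf{h}(e)=(t_1,\dots,t_r)$, a finite (possibly empty) ordered list of vertices. The F-paths from $s\in V$ are defined recursively: for any arc $e=(s\to(t_1,\dots,t_r))\in E$ and any F-paths $p_1,\dots,p_r$ from $t_1,\dots,t_r$, the tree $\langle e;p_1,\dots,p_r\rangle$ is an F-path from $s$ (a leaf if $r=0$). $\mathcal{P}(s)$ is the set of F-paths from $s$; "$e\in p$" means that $e$ is the arc used at some node of $p$. The F-graph is acyclic if the directed graph on $V$ with an edge $s\to u$ whenever $u$ occurs in the head of an arc with tail $s$ has no directed cycle; it is independent if in every F-path (from any root) each vertex of $V$ labels at most one node. An oriented F-graph $(v_0,V,E,\pi)$ is a weighted independent F-graph with a distinguished initial vertex $v_0\in V$. The weight of an F-path is $\pi(p)=\prod_{\text{nodes }x}\pi(e_x)$, $e_x$ being the arc used at node $x$, and $W(s)=\sum_{p\in\mathcal{P}(s)}\pi(p)$ (empty sum $0$, empty product $1$); $\mathbf{1}_{s=v_0}$ is $1$ if $s=v_0$ and $0$ otherwise. *)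

theory Defs
  imports Complex_Main
begin

text \<open>F-paths are finite rooted ordered trees whose nodes are labelled by arcs.\<close>
datatype 'e fpath = FNode 'e "'e fpath list"

text \<open>An F-graph is given by a vertex set V, an arc set E, a tail map and a head map
  (head e is an ordered, possibly empty, list of vertices).\<close>

inductive is_fpath :: "'e set \<Rightarrow> ('e \<Rightarrow> 'v) \<Rightarrow> ('e \<Rightarrow> 'v list) \<Rightarrow> 'v \<Rightarrow> 'e fpath \<Rightarrow> bool"
  for E tail heads where
  mk: "e \<in> E \<Longrightarrow> tail e = s \<Longrightarrow> list_all2 (is_fpath E tail heads) (heads e) ps
       \<Longrightarrow> is_fpath E tail heads s (FNode e ps)"

fun fpath_arcs :: "'e fpath \<Rightarrow> 'e list" where
  "fpath_arcs (FNode e ps) = e # concat (map fpath_arcs ps)"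

definition fpath_weight :: "('e \<Rightarrow> real) \<Rightarrow> 'e fpath \<Rightarrow> real" where
  "fpath_weight \<pi> p = prod_list (map \<pi> (fpath_arcs p))"

definition W :: "'e set \<Rightarrow> ('e \<Rightarrow> 'v) \<Rightarrow> ('e \<Rightarrow> 'v list) \<Rightarrow> ('e \<Rightarrow> real) \<Rightarrow> 'v \<Rightarrow> real" where
  "W E tail heads \<pi> s = (\<Sum>p\<in>{p. is_fpath E tail heads s p}. fpath_weight \<pi> p)"

definition is_fgraph :: "'v set \<Rightarrow> 'e set \<Rightarrow> ('e \<Rightarrow> 'v) \<Rightarrow> ('e \<Rightarrow> 'v list) \<Rightarrow> bool" where
  "is_fgraph V E tail heads \<longleftrightarrow> finite V \<and> finite E \<and>
     (\<forall>e\<in>E. tail e \<in> V \<and> set (heads e) \<subseteq> V)"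

definition fgraph_acyclic :: "'e set \<Rightarrow> ('e \<Rightarrow> 'v) \<Rightarrow> ('e \<Rightarrow> 'v list) \<Rightarrow> bool" where
  "fgraph_acyclic E tail heads \<longleftrightarrow> acyclic {(s, u). \<exists>e\<in>E. tail e = s \<and> u \<in> set (heads e)}"

text \<open>Independent: in every F-path (from any root) each vertex labels at most one node,
  the label of a node being the tail of its arc.\<close>
definition fgraph_independent :: "'e set \<Rightarrow> ('e \<Rightarrow> 'v) \<Rightarrow> ('e \<Rightarrow> 'v list) \<Rightarrow> bool" where
  "fgraph_independent E tail heads \<longleftrightarrow>
     (\<forall>s p. is_fpath E tail heads s p \<longrightarrow> distinct (map tail (fpath_arcs p)))"

end

theory Submission
  imports Defs
begin

text \<open>
  Fix an arc e and write A(s) for the total weight of the F-paths from s that use e.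
  The proof is a duality argument between two linear recurrences on V.

  (1) Splitting an F-path at its root arc e' and using independence (e occurs in at most
      one subtree) and acyclicity (no F-path from a head of e uses e) gives
        A(s) = [s = t(e)] pi(e) prod_{h in h(e)} W(h)
               + sum_{t(e') = s} pi(e') sum_{u in h(e')} A(u) prod_{s' in h(e'), s' ~= u} W(s').
  (2) The recurrence defining Out has the transposed coefficient matrix.  Whenever
      A = b + M A and Out = d + M^T Out on a finite set, one has <Out, b> = <d, A>.
      With b = [. = t(e)] pi(e) prod W(h(e)) and d = [. = v0] this reads
      Out(t(e)) pi(e) prod W(h(e)) = A(v0), which is the claim.
\<close>

section \<open>Lists of children\<close>

lemma children_Cons:
  "{ps. list_all2 Q (h # hs) ps} = (\<lambda>(p, ps). p # ps) ` ({p. Q h p} \<times> {ps. list_all2 Q hs ps})"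
  by (auto simp: list_all2_Cons1 image_iff)

lemma finite_children:
  assumes "\<forall>h\<in>set hs. finite {p. Q h p}"
  shows "finite {ps. list_all2 Q hs ps}"
  using assms
proof (induction hs)
  case Nil
  have "{ps. list_all2 Q [] ps} = {[]}" by auto
  then show ?case by simp
qed (simp add: children_Cons)

lemma sum_children_prod:
  fixes g :: "'h \<Rightarrow> 'p \<Rightarrow> real"
  assumes "\<forall>h\<in>set hs. finite {p. Q h p}"
  shows "(\<Sum>ps\<in>{ps. list_all2 Q hs ps}. prod_list (map2 g hs ps))
         = prod_list (map (\<lambda>h. \<Sum>p\<in>{p. Q h p}. g h p) hs)"
  using assms
proof (induction hs)
  case Nil
  then show ?case by simp
next
  case (Cons h hs)
  let ?Ps = "{ps. list_all2 Q hs ps}"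
  have inj: "inj_on (\<lambda>(p, ps). p # ps) X" for X :: "('p \<times> 'p list) set"
    by (auto simp: inj_on_def)
  have "(\<Sum>ps\<in>{ps. list_all2 Q (h # hs) ps}. prod_list (map2 g (h # hs) ps))
      = (\<Sum>(p, ps)\<in>{p. Q h p} \<times> ?Ps. g h p * prod_list (map2 g hs ps))"
    unfolding children_Cons by (subst sum.reindex[OF inj]) (simp add: case_prod_unfold)
  also have "\<dots> = (\<Sum>p\<in>{p. Q h p}. g h p) * (\<Sum>ps\<in>?Ps. prod_list (map2 g hs ps))"
    by (simp add: sum.cartesian_product sum_product)
  finally show ?case using Cons by simp
qed

lemma children_empty:
  assumes "{ps. list_all2 Q hs ps} = {}"
  shows "\<exists>h\<in>set hs. {p. Q h p} = {}"
  using assms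
proof (induction hs)
  case (Cons h hs)
  then show ?case by (auto simp: children_Cons)
qed simp

lemma prod_list_replace_one:
  fixes f :: "'a \<Rightarrow> real"
  assumes "distinct hs" "u \<in> set hs"
  shows "prod_list (map (\<lambda>h. if h = u then a else f h) hs)
       = a * prod_list (map f (filter (\<lambda>h. h \<noteq> u) hs))"
proof -
  have "prod_list (map (\<lambda>h. if h = u then a else f h) hs) = (\<Prod>h\<in>set hs. if h = u then a else f h)"
    using assms(1) by (simp add: prod.distinct_set_conv_list)
  also have "\<dots> = a * (\<Prod>h\<in>set hs - {u}. f h)"
    using assms(2) by (simp add: prod.remove)
  also have "(\<Prod>h\<in>set hs - {u}. f h) = prod_list (map f (filter (\<lambda>h. h \<noteq> u) hs))"
    using assms(1) by (simp add: prod.distinct_set_conv_list[symmetric] set_minus_filter_out)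
  finally show ?thesis .
qed

lemma map2_ignore_first:
  "length hs = length ps \<Longrightarrow> map2 (\<lambda>h. f) hs ps = map f ps"
  by (induction hs ps rule: list_induct2) auto

lemma map2_unmarked:
  assumes "length hs = length ps" "u \<notin> set hs"
  shows "map2 (\<lambda>h p. if h \<noteq> u \<or> P p then w p else 0) hs ps = map w ps"
  using assms by (induction hs ps rule: list_induct2) auto

lemma sum_mark_one_position:
  fixes w :: "'p \<Rightarrow> real"
  assumes "length hs = length ps" "distinct hs" "sorted_wrt (\<lambda>p q. \<not> (P p \<and> P q)) ps"
  shows "(\<Sum>u\<in>set hs. prod_list (map2 (\<lambda>h p. if h \<noteq> u \<or> P p then w p else 0) hs ps))
       = (if \<exists>p\<in>set ps. P p then prod_list (map w ps) else 0)"
  using assms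
proof (induction hs ps rule: list_induct2)
  case Nil
  then show ?case by simp
next
  case (Cons h hs p ps)
  let ?term = "\<lambda>u hs ps. prod_list (map2 (\<lambda>h p. if h \<noteq> u \<or> P p then w p else 0) hs ps)"
  have h: "h \<notin> set hs" "distinct hs" using Cons.prems by auto
  have "(\<Sum>u\<in>set (h # hs). ?term u (h # hs) (p # ps))
      = (if P p then w p else 0) * prod_list (map w ps) + w p * (\<Sum>u\<in>set hs. ?term u hs ps)"
    using h map2_unmarked[OF Cons.hyps h(1), of P w]
    by (auto simp: sum_distrib_left intro!: sum.cong)
  also have "(\<Sum>u\<in>set hs. ?term u hs ps) = (if \<exists>q\<in>set ps. P q then prod_list (map w ps) else 0)"
    using Cons.IH h Cons.prems by simp
  finally show ?case using Cons.prems by auto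
qed

lemma distinct_concat_disjoint:
  "distinct (concat xss) \<Longrightarrow> sorted_wrt (\<lambda>xs ys. set xs \<inter> set ys = {}) xss"
  by (induction xss) auto

lemma distinct_map_of_sorted_wrt:
  "sorted_wrt (\<lambda>x y. f x \<noteq> f y) xs \<Longrightarrow> distinct (map f xs)"
  by (induction xs) auto

section \<open>F-paths\<close>

fun froot :: "'e fpath \<Rightarrow> 'e" where
  "froot (FNode e ps) = e"

lemma froot_in_arcs: "froot p \<in> set (fpath_arcs p)"
  by (cases p) simp

lemma fpath_weight_node:
  "fpath_weight \<pi> (FNode e ps) = \<pi> e * prod_list (map (fpath_weight \<pi>) ps)"
proof -
  have "prod_list (map \<pi> (concat (map fpath_arcs ps))) = prod_list (map (fpath_weight \<pi>) ps)"
    by (induction ps) (simp_all add: fpath_weight_def)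
  then show ?thesis by (simp add: fpath_weight_def)
qed

definition arc_rel :: "'e set \<Rightarrow> ('e \<Rightarrow> 'v) \<Rightarrow> ('e \<Rightarrow> 'v list) \<Rightarrow> ('v \<times> 'v) set" where
  "arc_rel E tail heads = {(s, u). \<exists>e\<in>E. tail e = s \<and> u \<in> set (heads e)}"

definition through_weight ::
  "'e set \<Rightarrow> ('e \<Rightarrow> 'v) \<Rightarrow> ('e \<Rightarrow> 'v list) \<Rightarrow> ('e \<Rightarrow> real) \<Rightarrow> 'e \<Rightarrow> 'v \<Rightarrow> real" where
  "through_weight E tail heads \<pi> e s =
     (\<Sum>p\<in>{p. is_fpath E tail heads s p \<and> e \<in> set (fpath_arcs p)}. fpath_weight \<pi> p)"

context
  fixes E :: "'e set" and tail :: "'e \<Rightarrow> 'v" and heads :: "'e \<Rightarrow> 'v list" and \<pi> :: "'e \<Rightarrow> real"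
begin

lemma fpath_root_tail: "is_fpath E tail heads s p \<Longrightarrow> tail (froot p) = s"
  by (erule is_fpath.cases) auto

lemma children_roots: "list_all2 (is_fpath E tail heads) hs ps \<Longrightarrow> map (tail \<circ> froot) ps = hs"
  by (induction rule: list_all2_induct) (auto simp: fpath_root_tail)

lemma fpaths_from:
  "{p. is_fpath E tail heads s p} = (\<lambda>(e', ps). FNode e' ps) `
     (SIGMA e':{e'\<in>E. tail e' = s}. {ps. list_all2 (is_fpath E tail heads) (heads e') ps})"
  by (auto elim: is_fpath.cases intro: is_fpath.mk simp: image_iff)

lemma fpath_arc_reachable:
  "is_fpath E tail heads s p \<Longrightarrow> e \<in> set (fpath_arcs p) \<Longrightarrow> (s, tail e) \<in> (arc_rel E tail heads)\<^sup>*"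
proof (induction rule: is_fpath.induct)
  case (mk e' s ps)
  show ?case
  proof (cases "e = e'")
    case True
    then show ?thesis using mk by simp
  next
    case False
    then obtain q where "q \<in> set ps" "e \<in> set (fpath_arcs q)" using mk.prems by auto
    then obtain i where i: "i < length ps" "e \<in> set (fpath_arcs (ps ! i))"
      by (auto simp: in_set_conv_nth)
    have len: "length (heads e') = length ps" using mk.IH by (simp add: list_all2_lengthD)
    have "(heads e' ! i, tail e) \<in> (arc_rel E tail heads)\<^sup>*"
      using mk.IH i by (auto simp: list_all2_conv_all_nth)
    moreover have "(s, heads e' ! i) \<in> arc_rel E tail heads"
      using mk.hyps(1,2) i len by (auto simp: arc_rel_def)
    ultimately show ?thesis by (meson converse_rtrancl_into_rtrancl)
  qed
qed

lemma finite_fpaths: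
  assumes "finite E" "acyclic (arc_rel E tail heads)"
  shows "finite {p. is_fpath E tail heads s p}"
proof -
  have "arc_rel E tail heads \<subseteq> (\<Union>e\<in>E. {tail e} \<times> set (heads e))"
    by (auto simp: arc_rel_def)
  then have "finite (arc_rel E tail heads)"
    by (rule finite_subset) (use assms(1) in auto)
  then have wf: "wf ((arc_rel E tail heads)\<inverse>)"
    using assms(2) by (rule finite_acyclic_wf_converse)
  show ?thesis
  proof (induction s rule: wf_induct[OF wf])
    case (1 s)
    then have "finite {ps. list_all2 (is_fpath E tail heads) (heads e') ps}"
      if "e' \<in> E" "tail e' = s" for e'
      using that by (intro finite_children) (auto simp: arc_rel_def)
    then show ?case
      using assms(1) by (subst fpaths_from) (auto intro!: finite_imageI finite_SigmaI)
  qed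
qed

lemma children_disjoint_tails:
  assumes "distinct (map tail (concat (map fpath_arcs ps)))"
  shows "sorted_wrt (\<lambda>p q. tail ` set (fpath_arcs p) \<inter> tail ` set (fpath_arcs q) = {}) ps"
proof -
  have "distinct (concat (map (map tail \<circ> fpath_arcs) ps))"
    using assms by (simp add: map_concat)
  then have "sorted_wrt (\<lambda>xs ys. set xs \<inter> set ys = {}) (map (map tail \<circ> fpath_arcs) ps)"
    by (rule distinct_concat_disjoint)
  then show ?thesis
    by (simp add: sorted_wrt_map)
qed

lemma children_use_arc_once:
  assumes "distinct (map tail (concat (map fpath_arcs ps)))"
  shows "sorted_wrt (\<lambda>p q. \<not> (e \<in> set (fpath_arcs p) \<and> e \<in> set (fpath_arcs q))) ps"
  using children_disjoint_tails[OF assms] by (rule sorted_wrt_mono_rel[rotated]) blast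

lemma children_heads_distinct:
  assumes "list_all2 (is_fpath E tail heads) hs ps"
    and "distinct (map tail (concat (map fpath_arcs ps)))"
  shows "distinct hs"
proof -
  have "sorted_wrt (\<lambda>p q. (tail \<circ> froot) p \<noteq> (tail \<circ> froot) q) ps"
  proof (rule sorted_wrt_mono_rel[OF _ children_disjoint_tails[OF assms(2)]])
    fix p q
    assume "tail ` set (fpath_arcs p) \<inter> tail ` set (fpath_arcs q) = {}"
    moreover have "tail (froot p) \<in> tail ` set (fpath_arcs p)" "tail (froot q) \<in> tail ` set (fpath_arcs q)"
      using froot_in_arcs by (rule imageI)+
    ultimately show "(tail \<circ> froot) p \<noteq> (tail \<circ> froot) q" by (metis IntI comp_apply empty_iff)
  qed
  then show ?thesis
    using children_roots[OF assms(1)] by (metis distinct_map_of_sorted_wrt)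
qed

lemma children_weight:
  assumes "\<forall>h\<in>set hs. finite {p. is_fpath E tail heads h p}"
  shows "(\<Sum>ps\<in>{ps. list_all2 (is_fpath E tail heads) hs ps}. prod_list (map (fpath_weight \<pi>) ps))
       = prod_list (map (W E tail heads \<pi>) hs)"
proof -
  have "(\<Sum>ps\<in>{ps. list_all2 (is_fpath E tail heads) hs ps}. prod_list (map (fpath_weight \<pi>) ps))
      = (\<Sum>ps\<in>{ps. list_all2 (is_fpath E tail heads) hs ps}. prod_list (map2 (\<lambda>h. fpath_weight \<pi>) hs ps))"
    by (intro sum.cong refl) (auto dest: list_all2_lengthD simp: map2_ignore_first)
  also have "\<dots> = prod_list (map (W E tail heads \<pi>) hs)"
    by (simp add: sum_children_prod[OF assms] W_def[abs_def])
  finally show ?thesis .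
qed

section \<open>The recurrence for the weight of the paths through an arc\<close>

lemma through_weight_by_root:
  assumes finE: "finite E" and finP: "\<forall>h. finite {p. is_fpath E tail heads h p}"
  shows "through_weight E tail heads \<pi> e s =
    (\<Sum>e'\<in>{e'\<in>E. tail e' = s}. \<Sum>ps\<in>{ps. list_all2 (is_fpath E tail heads) (heads e') ps}.
        if e \<in> set (fpath_arcs (FNode e' ps)) then \<pi> e' * prod_list (map (fpath_weight \<pi>) ps) else 0)"
proof -
  have inj: "inj_on (\<lambda>(e', ps). FNode e' ps) X" for X :: "('e \<times> 'e fpath list) set"
    by (auto simp: inj_on_def)
  have fin: "\<forall>e'\<in>{e'\<in>E. tail e' = s}. finite {ps. list_all2 (is_fpath E tail heads) (heads e') ps}"
    using finP by (auto intro: finite_children)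
  have "through_weight E tail heads \<pi> e s =
      (\<Sum>p\<in>{p. is_fpath E tail heads s p}. if e \<in> set (fpath_arcs p) then fpath_weight \<pi> p else 0)"
    using sum.inter_filter[OF finP[rule_format, of s]] by (simp add: through_weight_def)
  also have "\<dots> = (\<Sum>(e', ps)\<in>(SIGMA e':{e'\<in>E. tail e' = s}. {ps. list_all2 (is_fpath E tail heads) (heads e') ps}).
       if e \<in> set (fpath_arcs (FNode e' ps)) then \<pi> e' * prod_list (map (fpath_weight \<pi>) ps) else 0)"
    unfolding fpaths_from
    by (subst sum.reindex[OF inj]) (auto simp: fpath_weight_node intro!: sum.cong)
  also have "\<dots> = (\<Sum>e'\<in>{e'\<in>E. tail e' = s}. \<Sum>ps\<in>{ps. list_all2 (is_fpath E tail heads) (heads e') ps}.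
        if e \<in> set (fpath_arcs (FNode e' ps)) then \<pi> e' * prod_list (map (fpath_weight \<pi>) ps) else 0)"
    using finE fin by (subst sum.Sigma) auto
  finally show ?thesis .
qed

text \<open>The weight of the lists of children in which some child uses e, for distinct heads
  and children with pairwise disjoint vertex sets: exactly one child uses e, so the sum
  splits according to its position u.\<close>
lemma children_through_weight:
  assumes fin: "\<forall>h\<in>set hs. finite {p. is_fpath E tail heads h p}" and dhs: "distinct hs"
    and disj: "\<forall>ps. list_all2 (is_fpath E tail heads) hs ps \<longrightarrow> distinct (map tail (concat (map fpath_arcs ps)))"
  shows "(\<Sum>ps\<in>{ps. list_all2 (is_fpath E tail heads) hs ps}.
            if e \<in> set (concat (map fpath_arcs ps)) then prod_list (map (fpath_weight \<pi>) ps) else 0)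
    = (\<Sum>u\<in>set hs. through_weight E tail heads \<pi> e u * prod_list (map (W E tail heads \<pi>) (filter (\<lambda>h. h \<noteq> u) hs)))"
proof -
  let ?Ps = "{ps. list_all2 (is_fpath E tail heads) hs ps}"
  define g :: "'v \<Rightarrow> 'v \<Rightarrow> 'e fpath \<Rightarrow> real"
    where "g u h p = (if h \<noteq> u \<or> e \<in> set (fpath_arcs p) then fpath_weight \<pi> p else 0)" for u h p
  have "(\<Sum>ps\<in>?Ps. if e \<in> set (concat (map fpath_arcs ps)) then prod_list (map (fpath_weight \<pi>) ps) else 0)
      = (\<Sum>ps\<in>?Ps. \<Sum>u\<in>set hs. prod_list (map2 (g u) hs ps))"
  proof (rule sum.cong[OF refl])
    fix ps assume ps: "ps \<in> ?Ps"
    have "sorted_wrt (\<lambda>p q. \<not> (e \<in> set (fpath_arcs p) \<and> e \<in> set (fpath_arcs q))) ps"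
      using disj ps by (intro children_use_arc_once) simp
    then show "(if e \<in> set (concat (map fpath_arcs ps)) then prod_list (map (fpath_weight \<pi>) ps) else 0)
        = (\<Sum>u\<in>set hs. prod_list (map2 (g u) hs ps))"
      using sum_mark_one_position[of hs ps, OF _ dhs] ps
      by (simp add: g_def list_all2_lengthD)
  qed
  also have "\<dots> = (\<Sum>u\<in>set hs. prod_list (map (\<lambda>h. \<Sum>p\<in>{p. is_fpath E tail heads h p}. g u h p) hs))"
    by (subst sum.swap) (simp add: sum_children_prod[OF fin])
  also have "\<dots> = (\<Sum>u\<in>set hs. prod_list (map (\<lambda>h. if h = u then through_weight E tail heads \<pi> e u
                                                      else W E tail heads \<pi> h) hs))"
  proof (intro sum.cong refl arg_cong[where f = prod_list] map_cong)
    fix u h assume "h \<in> set hs"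
    then have fin_h: "finite {p. is_fpath E tail heads h p}" using fin by auto
    have "(\<Sum>p\<in>{p. is_fpath E tail heads h p}. if e \<in> set (fpath_arcs p) then fpath_weight \<pi> p else 0)
        = through_weight E tail heads \<pi> e h"
      using sum.inter_filter[OF fin_h, of "fpath_weight \<pi>" "\<lambda>p. e \<in> set (fpath_arcs p)"]
      by (simp add: through_weight_def)
    then show "(\<Sum>p\<in>{p. is_fpath E tail heads h p}. g u h p)
        = (if h = u then through_weight E tail heads \<pi> e u else W E tail heads \<pi> h)"
      by (auto simp: g_def W_def if_distrib intro: sum.cong)
  qed
  also have "\<dots> = (\<Sum>u\<in>set hs. through_weight E tail heads \<pi> e u * prod_list (map (W E tail heads \<pi>) (filter (\<lambda>h. h \<noteq> u) hs)))"
    by (rule sum.cong[OF refl]) (simp add: prod_list_replace_one[OF dhs])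
  finally show ?thesis .
qed

lemma through_terms_vanish:
  assumes "{ps. list_all2 (is_fpath E tail heads) hs ps} = {}"
  shows "(\<Sum>u\<in>set hs. through_weight E tail heads \<pi> e u * prod_list (map (W E tail heads \<pi>) (filter (\<lambda>h. h \<noteq> u) hs))) = 0"
proof (rule sum.neutral, rule ballI)
  obtain h0 where h0: "h0 \<in> set hs" "{p. is_fpath E tail heads h0 p} = {}"
    using children_empty[OF assms] by blast
  fix u assume "u \<in> set hs"
  show "through_weight E tail heads \<pi> e u * prod_list (map (W E tail heads \<pi>) (filter (\<lambda>h. h \<noteq> u) hs)) = 0"
  proof (cases "u = h0")
    case True
    then show ?thesis using h0 by (simp add: through_weight_def)
  next
    case False
    have "W E tail heads \<pi> h0 = 0" using h0 by (simp add: W_def)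
    then have "prod_list (map (W E tail heads \<pi>) (filter (\<lambda>h. h \<noteq> u) hs)) = 0"
      using h0 False by (force simp: prod_list_zero_iff)
    then show ?thesis by simp
  qed
qed

lemma through_weight_root_term:
  assumes finP: "\<forall>h. finite {p. is_fpath E tail heads h p}"
    and indep: "fgraph_independent E tail heads" and e': "e' \<in> E"
  shows "(\<Sum>ps\<in>{ps. list_all2 (is_fpath E tail heads) (heads e') ps}.
            if e \<in> set (fpath_arcs (FNode e' ps)) then \<pi> e' * prod_list (map (fpath_weight \<pi>) ps) else 0)
    = (if e' = e then \<pi> e * prod_list (map (W E tail heads \<pi>) (heads e))
       else \<pi> e' * (\<Sum>u\<in>set (heads e'). through_weight E tail heads \<pi> e u
                        * prod_list (map (W E tail heads \<pi>) (filter (\<lambda>h. h \<noteq> u) (heads e')))))"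
proof (cases "e' = e")
  case True
  then show ?thesis
    using children_weight[of "heads e"] finP by (simp add: sum_distrib_left[symmetric])
next
  case False
  let ?Ps = "{ps. list_all2 (is_fpath E tail heads) (heads e') ps}"
  have disj: "\<forall>ps. list_all2 (is_fpath E tail heads) (heads e') ps
                \<longrightarrow> distinct (map tail (concat (map fpath_arcs ps)))"
  proof (intro allI impI)
    fix ps assume "list_all2 (is_fpath E tail heads) (heads e') ps"
    then have "is_fpath E tail heads (tail e') (FNode e' ps)" by (rule is_fpath.mk[OF e' refl])
    then have "distinct (map tail (fpath_arcs (FNode e' ps)))"
      using indep unfolding fgraph_independent_def by blast
    then show "distinct (map tail (concat (map fpath_arcs ps)))" by simp
  qed
  have "(\<Sum>ps\<in>?Ps. if e \<in> set (fpath_arcs (FNode e' ps)) then \<pi> e' * prod_list (map (fpath_weight \<pi>) ps) else 0)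
      = \<pi> e' * (\<Sum>ps\<in>?Ps. if e \<in> set (concat (map fpath_arcs ps)) then prod_list (map (fpath_weight \<pi>) ps) else 0)"
    using False by (auto simp: sum_distrib_left intro!: sum.cong)
  also have "\<dots> = \<pi> e' * (\<Sum>u\<in>set (heads e'). through_weight E tail heads \<pi> e u
                        * prod_list (map (W E tail heads \<pi>) (filter (\<lambda>h. h \<noteq> u) (heads e'))))"
  proof (cases "?Ps = {}")
    case True
    then show ?thesis using through_terms_vanish by simp
  next
    case False
    then obtain ps0 where "list_all2 (is_fpath E tail heads) (heads e') ps0" by auto
    then have dh: "distinct (heads e')" using disj children_heads_distinct by blast
    show ?thesis using children_through_weight[OF _ dh disj] finP by simp
  qed
  finally show ?thesis using False by simp
qed

text \<open>By acyclicity no F-path from a head of the arc e uses e.\<close>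
lemma through_weight_below_arc:
  assumes acyc: "acyclic (arc_rel E tail heads)" and e: "e \<in> E" and u: "u \<in> set (heads e)"
  shows "through_weight E tail heads \<pi> e u = 0"
proof (rule ccontr)
  assume "through_weight E tail heads \<pi> e u \<noteq> 0"
  then have "{p. is_fpath E tail heads u p \<and> e \<in> set (fpath_arcs p)} \<noteq> {}"
    by (metis sum.empty through_weight_def)
  then obtain p where "is_fpath E tail heads u p" "e \<in> set (fpath_arcs p)"
    by blast
  then have "(u, tail e) \<in> (arc_rel E tail heads)\<^sup>*" by (rule fpath_arc_reachable)
  moreover have "(tail e, u) \<in> arc_rel E tail heads" using e u by (auto simp: arc_rel_def)
  ultimately have "(tail e, tail e) \<in> (arc_rel E tail heads)\<^sup>+" by (meson rtrancl_into_trancl2)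
  then show False using acyc by (simp add: acyclic_def)
qed

lemma through_weight_rec:
  assumes finE: "finite E" and acyc: "acyclic (arc_rel E tail heads)"
    and indep: "fgraph_independent E tail heads" and e: "e \<in> E"
  shows "through_weight E tail heads \<pi> e s =
     (if s = tail e then \<pi> e * prod_list (map (W E tail heads \<pi>) (heads e)) else 0)
     + (\<Sum>e'\<in>{e'\<in>E. tail e' = s}. \<pi> e' * (\<Sum>u\<in>set (heads e'). through_weight E tail heads \<pi> e u
                        * prod_list (map (W E tail heads \<pi>) (filter (\<lambda>h. h \<noteq> u) (heads e')))))"
proof -
  have finP: "\<forall>h. finite {p. is_fpath E tail heads h p}"
    using finite_fpaths[OF finE acyc] by blast
  have "through_weight E tail heads \<pi> e s =
     (\<Sum>e'\<in>{e'\<in>E. tail e' = s}. (if e' = e then \<pi> e * prod_list (map (W E tail heads \<pi>) (heads e)) else 0)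
        + \<pi> e' * (\<Sum>u\<in>set (heads e'). through_weight E tail heads \<pi> e u
                        * prod_list (map (W E tail heads \<pi>) (filter (\<lambda>h. h \<noteq> u) (heads e')))))"
  proof (rule trans[OF through_weight_by_root[OF finE finP]], rule sum.cong[OF refl])
    fix e' assume "e' \<in> {e'\<in>E. tail e' = s}"
    moreover have "(\<Sum>u\<in>set (heads e). through_weight E tail heads \<pi> e u
                     * prod_list (map (W E tail heads \<pi>) (filter (\<lambda>h. h \<noteq> u) (heads e)))) = 0"
      using through_weight_below_arc[OF acyc e] by simp
    ultimately show "(\<Sum>ps\<in>{ps. list_all2 (is_fpath E tail heads) (heads e') ps}.
            if e \<in> set (fpath_arcs (FNode e' ps)) then \<pi> e' * prod_list (map (fpath_weight \<pi>) ps) else 0)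
      = (if e' = e then \<pi> e * prod_list (map (W E tail heads \<pi>) (heads e)) else 0)
        + \<pi> e' * (\<Sum>u\<in>set (heads e'). through_weight E tail heads \<pi> e u
                        * prod_list (map (W E tail heads \<pi>) (filter (\<lambda>h. h \<noteq> u) (heads e'))))"
      using through_weight_root_term[OF finP indep, of e'] by auto
  qed
  then show ?thesis
    using finE e by (simp add: sum.distrib)
qed

end

section \<open>Duality of transposed recurrences\<close>

text \<open>Then the pairings agree:
  both sides equal sum_s Out(s) A(s) minus the common double sum over arcs.\<close>
lemma transposed_recurrences_duality:
  fixes A Out b d :: "'v \<Rightarrow> real" and c :: "'e \<Rightarrow> 'v \<Rightarrow> real"
    and tail :: "'e \<Rightarrow> 'v" and H :: "'e \<Rightarrow> 'v set"
  assumes finV: "finite V" and finE: "finite E"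
    and tV: "\<forall>e\<in>E. tail e \<in> V" and HV: "\<forall>e\<in>E. H e \<subseteq> V"
    and A_rec: "\<forall>s\<in>V. A s = b s + (\<Sum>e\<in>{e\<in>E. tail e = s}. \<Sum>u\<in>H e. c e u * A u)"
    and Out_rec: "\<forall>u\<in>V. Out u = d u + (\<Sum>e\<in>{e\<in>E. u \<in> H e}. c e u * Out (tail e))"
  shows "(\<Sum>s\<in>V. Out s * b s) = (\<Sum>u\<in>V. d u * A u)"
proof -
  define T where "T = (\<Sum>e\<in>E. \<Sum>u\<in>H e. Out (tail e) * c e u * A u)"
  have "T = (\<Sum>s\<in>V. \<Sum>e\<in>{e\<in>E. tail e = s}. \<Sum>u\<in>H e. Out (tail e) * c e u * A u)"
    unfolding T_def using finE finV tV by (subst sum.group) auto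
  also have "\<dots> = (\<Sum>s\<in>V. Out s * (\<Sum>e\<in>{e\<in>E. tail e = s}. \<Sum>u\<in>H e. c e u * A u))"
    by (auto simp: sum_distrib_left mult.assoc intro!: sum.cong)
  finally have T_by_tail: "T = (\<Sum>s\<in>V. Out s * (A s - b s))"
    using A_rec by (auto intro!: sum.cong)
  have "T = (\<Sum>e\<in>E. \<Sum>u\<in>{u\<in>V. u \<in> H e}. Out (tail e) * c e u * A u)"
    unfolding T_def using HV by (intro sum.cong refl) (auto intro: arg_cong[where f = "sum _"])
  also have "\<dots> = (\<Sum>u\<in>V. \<Sum>e\<in>{e\<in>E. u \<in> H e}. Out (tail e) * c e u * A u)"
    using finE finV by (rule sum.swap_restrict)
  also have "\<dots> = (\<Sum>u\<in>V. (\<Sum>e\<in>{e\<in>E. u \<in> H e}. c e u * Out (tail e)) * A u)"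
    by (simp add: sum_distrib_left mult_ac)
  finally have T_by_head: "T = (\<Sum>u\<in>V. (Out u - d u) * A u)"
    using Out_rec by (auto intro!: sum.cong)
  from T_by_tail T_by_head show ?thesis
    by (simp add: algebra_simps sum_subtractf)
qed

lemma transposed_recurrences_point_sources:
  fixes A Out :: "'v \<Rightarrow> real" and c :: "'e \<Rightarrow> 'v \<Rightarrow> real"
    and tail :: "'e \<Rightarrow> 'v" and H :: "'e \<Rightarrow> 'v set"
  assumes finV: "finite V" and finE: "finite E"
    and tV: "\<forall>e\<in>E. tail e \<in> V" and HV: "\<forall>e\<in>E. H e \<subseteq> V" and x: "x \<in> V" and y: "y \<in> V"
    and A_rec: "\<forall>s\<in>V. A s = (if s = x then C else 0) + (\<Sum>e\<in>{e\<in>E. tail e = s}. \<Sum>u\<in>H e. c e u * A u)"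
    and Out_rec: "\<forall>u\<in>V. Out u = (if u = y then 1 else 0) + (\<Sum>e\<in>{e\<in>E. u \<in> H e}. c e u * Out (tail e))"
  shows "A y = Out x * C"
proof -
  have "Out x * C = (\<Sum>s\<in>V. if s = x then Out s * C else 0)"
    using finV x by simp
  also have "\<dots> = (\<Sum>s\<in>V. Out s * (if s = x then C else 0))"
    by (rule sum.cong) simp_all
  also have "\<dots> = (\<Sum>u\<in>V. (if u = y then 1 else 0) * A u)"
    using transposed_recurrences_duality[OF finV finE tV HV A_rec Out_rec] .
  also have "\<dots> = (\<Sum>u\<in>V. if u = y then A u else 0)"
    by (rule sum.cong) simp_all
  also have "\<dots> = A y"
    using finV y by simp
  finally show ?thesis ..
qed

theorem mainTheorem5:
  fixes V :: "'v set" and E :: "'e set" and tail :: "'e \<Rightarrow> 'v" and heads :: "'e \<Rightarrow> 'v list"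
    and \<pi> :: "'e \<Rightarrow> real" and v0 :: 'v and Out :: "'v \<Rightarrow> real"
  assumes fg: "is_fgraph V E tail heads"
    and v0: "v0 \<in> V"
    and pos: "\<forall>e\<in>E. \<pi> e > 0"
    and acyc: "fgraph_acyclic E tail heads"
    and indep: "fgraph_independent E tail heads"
    and Out_rec: "\<forall>s\<in>V. Out s = (if s = v0 then 1 else 0) +
        (\<Sum>e'\<in>{e'\<in>E. s \<in> set (heads e')}.
           \<pi> e' * Out (tail e') * prod_list (map (W E tail heads \<pi>) (filter (\<lambda>s'. s' \<noteq> s) (heads e'))))"
    and e: "e \<in> E"
  shows "(\<Sum>p\<in>{p. is_fpath E tail heads v0 p \<and> e \<in> set (fpath_arcs p)}. fpath_weight \<pi> p)
           = Out (tail e) * \<pi> e * prod_list (map (W E tail heads \<pi>) (heads e))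
      \<and> (\<Sum>p\<in>{p. is_fpath E tail heads v0 p \<and> e \<in> set (fpath_arcs p)}. fpath_weight \<pi> p / W E tail heads \<pi> v0)
           = Out (tail e) * \<pi> e * prod_list (map (W E tail heads \<pi>) (heads e)) / W E tail heads \<pi> v0"
proof -
  let ?A = "through_weight E tail heads \<pi> e"
  let ?C = "\<pi> e * prod_list (map (W E tail heads \<pi>) (heads e))"
  let ?c = "\<lambda>e' u. \<pi> e' * prod_list (map (W E tail heads \<pi>) (filter (\<lambda>h. h \<noteq> u) (heads e')))"
  have finV: "finite V" and finE: "finite E" and tV: "\<forall>e'\<in>E. tail e' \<in> V"
    and hV: "\<forall>e'\<in>E. set (heads e') \<subseteq> V"
    using fg by (auto simp: is_fgraph_def)
  have acyc': "acyclic (arc_rel E tail heads)"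
    using acyc by (simp add: fgraph_acyclic_def arc_rel_def)
  have A_rec: "\<forall>s\<in>V. ?A s = (if s = tail e then ?C else 0)
      + (\<Sum>e'\<in>{e'\<in>E. tail e' = s}. \<Sum>u\<in>set (heads e'). ?c e' u * ?A u)"
  proof
    fix s
    show "?A s = (if s = tail e then ?C else 0)
        + (\<Sum>e'\<in>{e'\<in>E. tail e' = s}. \<Sum>u\<in>set (heads e'). ?c e' u * ?A u)"
      by (subst through_weight_rec[OF finE acyc' indep e]) (simp add: sum_distrib_left mult_ac)
  qed
  have "\<forall>u\<in>V. Out u = (if u = v0 then 1 else 0)
      + (\<Sum>e'\<in>{e'\<in>E. u \<in> set (heads e')}. ?c e' u * Out (tail e'))"
    using Out_rec by (simp add: mult_ac)
  with A_rec have "?A v0 = Out (tail e) * ?C"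
    using tV e by (intro transposed_recurrences_point_sources[OF finV finE tV hV _ v0]) auto
  then show ?thesis
    by (simp add: through_weight_def sum_divide_distrib[symmetric] mult.assoc)
qed

end
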